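(* Let $d\ge 3$ be odd. Then $G_d$ is spherically transitive and fractal.
   Context: Let $d\ge 3$, $X=\{1,\dots,d\}$, $T$ the $d$-regular rooted tree with vertex set $X^*$. $\mathrm{Aut}(T)$ is the group of root-preserving automorphisms with product left-to-right: $(gh)(u)=h(g(u))$. Sections $g|_u$ are defined by $g(uv)=g(u)\,g|_u(v)$; we write $g=(g|_1,\dots,g|_d)\lambda_g$ with $\lambda_g\in S_d$ the action on the first level; $e$ is the identity; $\overline{j}\in\{1,\dots,d\}$ denotes $j$ mod $d$. $G_d=\langle a_1,\dots,a_d\rangle\le\mathrm{Aut}(T)$ where $a_i$ acts on the first level as $(i\ \overline{i+1})$, with $a_i|_i=a_i$, $a_i|_{\overline{i+1}}=a_{\overline{i+1}}$, and $a_i|_x=e$ otherwise. $G_d$ is self-similar (closed under sections). A subgroup $G\le\mathrm{Aut}(T)$ is spherically transitive if it acts transitively on $X^k$ for every $k$. For $u\in X^*$, $\mathrm{St}_G(u)$ is the stabilizer of $u$ and $\pi_u:\mathrm{St}_G(u)\to G$, $\pi_u(g)=g|_u$. A self-similar $G$ is fractal if $\pi_u(\mathrm{St}_G(u))=G$ for every vertex $u$. *)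

theory Defs
  imports Main
begin

text \<open>Tree automorphisms are represented as functions on nat lists that act as the
  identity outside the set of words. Group product (gh)(u) = h(g(u)) is h \<circ> g.\<close>

definition words :: "nat \<Rightarrow> nat list set" where
  "words d = {w. set w \<subseteq> {1..d}}"

definition nxt :: "nat \<Rightarrow> nat \<Rightarrow> nat" where
  "nxt d i = (if i = d then 1 else i + 1)"

fun genrec :: "nat \<Rightarrow> nat \<Rightarrow> nat list \<Rightarrow> nat list" where
  "genrec d i [] = []"
| "genrec d i (x # w) =
     (if x = i then nxt d i # genrec d i w
      else if x = nxt d i then i # genrec d (nxt d i) w
      else x # w)"

definition gen :: "nat \<Rightarrow> nat \<Rightarrow> nat list \<Rightarrow> nat list" where
  "gen d i u = (if u \<in> words d then genrec d i u else u)"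

inductive_set Gd :: "nat \<Rightarrow> (nat list \<Rightarrow> nat list) set" for d where
  Gd_id: "id \<in> Gd d"
| Gd_gen: "g \<in> Gd d \<Longrightarrow> i \<in> {1..d} \<Longrightarrow> gen d i \<circ> g \<in> Gd d"
| Gd_inv: "g \<in> Gd d \<Longrightarrow> i \<in> {1..d} \<Longrightarrow> inv (gen d i) \<circ> g \<in> Gd d"

definition spherically_transitive :: "nat \<Rightarrow> (nat list \<Rightarrow> nat list) set \<Rightarrow> bool" where
  "spherically_transitive d G \<longleftrightarrow>
     (\<forall>k. \<forall>u \<in> words d. \<forall>v \<in> words d. length u = k \<longrightarrow> length v = k \<longrightarrow>
        (\<exists>g \<in> G. g u = v))"

text \<open>Section g|_u, defined by g(uv) = g(u) g|_u(v).\<close>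
definition sect :: "nat \<Rightarrow> (nat list \<Rightarrow> nat list) \<Rightarrow> nat list \<Rightarrow> nat list \<Rightarrow> nat list" where
  "sect d g u = (\<lambda>v. if v \<in> words d then drop (length u) (g (u @ v)) else v)"

definition stabilizer :: "(nat list \<Rightarrow> nat list) set \<Rightarrow> nat list \<Rightarrow> (nat list \<Rightarrow> nat list) set" where
  "stabilizer G u = {g \<in> G. g u = u}"

definition fractal :: "nat \<Rightarrow> (nat list \<Rightarrow> nat list) set \<Rightarrow> bool" where
  "fractal d G \<longleftrightarrow> (\<forall>u \<in> words d. (\<lambda>g. sect d g u) ` stabilizer G u = G)"

end

theory Submission
  imports Defs
begin

text \<open>The stabiliser of a first-level vertex x in G_d projects onto G_d because it contains
  enough elements whose section at x is a generator.  Let P_k = a_x a_{x+1} \<cdots> a_{x+k-1}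
  (indices mod d); it moves x to x+k and its section at x is P_k itself.  Conjugating the square
  a_{x+m}^2, which fixes x+m with section a_{x+m} a_{x+m+1}, by P_m shows that P_{m+2} P_m^{-1}
  is a section at x of the stabiliser of x, hence so is every P_{2m}.  Since P_d fixes x and is
  its own section there, also P_k = P_d^{-1} P_{d+k} for odd k, since d+k is even when d
  is odd.  The generators a_{x+k} = P_k^{-1} P_{k+1} follow.  Level-one transitivity and this
  level-one fractality propagate down the tree by induction on the length of words.\<close>

section \<open>Tree automorphisms and their sections\<close>

lemma words_Nil [simp]: "[] \<in> words d"
  by (simp add: words_def)

lemma words_Cons [simp]: "x # w \<in> words d \<longleftrightarrow> x \<in> {1..d} \<and> w \<in> words d"
  by (auto simp: words_def)

lemma words_append [simp]: "u @ v \<in> words d \<longleftrightarrow> u \<in> words d \<and> v \<in> words d"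
  by (auto simp: words_def)

lemma words_take: "u \<in> words d \<Longrightarrow> take n u \<in> words d"
  by (auto simp: words_def dest: in_set_takeD)

lemma words_drop: "u \<in> words d \<Longrightarrow> drop n u \<in> words d"
  by (auto simp: words_def dest: in_set_dropD)

definition tree_aut :: "nat \<Rightarrow> (nat list \<Rightarrow> nat list) \<Rightarrow> bool" where
  "tree_aut d g \<longleftrightarrow> bij g \<and> (\<forall>u. u \<notin> words d \<longrightarrow> g u = u)
     \<and> (\<forall>u\<in>words d. g u \<in> words d \<and> length (g u) = length u)
     \<and> (\<forall>u\<in>words d. \<forall>v\<in>words d. take (length u) (g (u @ v)) = g u)"

lemma tree_autD:
  assumes "tree_aut d g"
  shows "bij g" "u \<notin> words d \<Longrightarrow> g u = u" "u \<in> words d \<Longrightarrow> g u \<in> words d"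
    "u \<in> words d \<Longrightarrow> length (g u) = length u"
    "u \<in> words d \<Longrightarrow> v \<in> words d \<Longrightarrow> take (length u) (g (u @ v)) = g u"
  using assms by (auto simp: tree_aut_def)

lemma tree_aut_Nil: "tree_aut d g \<Longrightarrow> g [] = []"
  using tree_autD(4)[of d g "[]"] by simp

lemma sect_apply: "v \<in> words d \<Longrightarrow> sect d g u v = drop (length u) (g (u @ v))"
  by (simp add: sect_def)

lemma tree_aut_append:
  assumes "tree_aut d g" "u \<in> words d" "v \<in> words d"
  shows "g (u @ v) = g u @ sect d g u v"
  using assms append_take_drop_id[of "length u" "g (u @ v)"] by (simp add: tree_autD sect_apply)

lemma sect_in_words: "tree_aut d g \<Longrightarrow> u \<in> words d \<Longrightarrow> v \<in> words d \<Longrightarrow> sect d g u v \<in> words d"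
  by (simp add: sect_apply tree_autD words_drop)

lemma length_sect: "tree_aut d g \<Longrightarrow> u \<in> words d \<Longrightarrow> v \<in> words d \<Longrightarrow> length (sect d g u v) = length v"
  by (simp add: sect_apply tree_autD)

lemma tree_aut_id: "tree_aut d id"
  by (simp add: tree_aut_def)

lemma tree_aut_comp:
  assumes g: "tree_aut d g" and h: "tree_aut d h"
  shows "tree_aut d (g \<circ> h)"
proof -
  have "take (length u) ((g \<circ> h) (u @ v)) = (g \<circ> h) u" if "u \<in> words d" "v \<in> words d" for u v
  proof -
    have "(g \<circ> h) (u @ v) = g (h u @ sect d h u v)"
      using tree_aut_append[OF h that] by simp
    moreover have "take (length (h u)) (g (h u @ sect d h u v)) = g (h u)"
      using tree_autD(5)[OF g] tree_autD(3)[OF h] sect_in_words[OF h] that by simp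
    ultimately show ?thesis using tree_autD(4)[OF h that(1)] by simp
  qed
  with g h show ?thesis
    unfolding tree_aut_def by (auto intro: bij_comp)
qed

lemma tree_aut_inv:
  assumes g: "tree_aut d g"
  shows "tree_aut d (inv g)"
proof -
  have bij: "bij g" using g tree_autD by blast
  have g_inv: "g (inv g u) = u" for u using bij by (simp add: bij_is_surj surj_f_inv_f)
  have inv_g: "inv g (g u) = u" for u using bij by (simp add: bij_is_inj)
  have off_words: "inv g u = u" if "u \<notin> words d" for u
    using g that inv_g by (metis tree_autD(2))
  have in_words: "inv g u \<in> words d" if "u \<in> words d" for u
    using g that g_inv by (metis tree_autD(2))
  have length: "length (inv g u) = length u" if "u \<in> words d" for u
    using g in_words[OF that] g_inv by (metis tree_autD(4))
  have prefix: "take (length u) (inv g (u @ v)) = inv g u" if "u \<in> words d" "v \<in> words d" for u v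
  proof -
    define w where "w = inv g (u @ v)"
    have "w \<in> words d" "length w = length u + length v"
      using in_words length that by (simp_all add: w_def)
    then have "take (length u) (g w) = g (take (length u) w)"
      using tree_autD(5)[OF g, of "take (length u) w" "drop (length u) w"]
      by (simp add: words_take words_drop)
    moreover have "g w = u @ v" using g_inv w_def by simp
    ultimately have "g (take (length u) w) = u" by simp
    then show ?thesis using inv_g w_def by metis
  qed
  show ?thesis unfolding tree_aut_def
    using bij bij_imp_bij_inv off_words in_words length prefix by blast
qed

lemma sect_id: "sect d id u = id"
  by (rule ext) (simp add: sect_def)

lemma sect_Nil: "tree_aut d g \<Longrightarrow> sect d g [] = g"
  by (rule ext) (auto simp: sect_def tree_autD)

lemma sect_append: "u \<in> words d \<Longrightarrow> w \<in> words d \<Longrightarrow> sect d g (u @ w) = sect d (sect d g u) w"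
  by (rule ext) (simp add: sect_def add.commute)

lemma sect_comp:
  assumes g: "tree_aut d g" and h: "tree_aut d h" and u: "u \<in> words d"
  shows "sect d (g \<circ> h) u = sect d g (h u) \<circ> sect d h u"
proof
  fix v
  show "sect d (g \<circ> h) u v = (sect d g (h u) \<circ> sect d h u) v"
  proof (cases "v \<in> words d")
    case True
    have "h u \<in> words d" "sect d h u v \<in> words d"
      using h u True by (auto simp: tree_autD sect_in_words)
    then have "g (h (u @ v)) = g (h u) @ sect d g (h u) (sect d h u v)"
      using tree_aut_append[OF h u True] tree_aut_append[OF g] by simp
    then show ?thesis using True g h u by (simp add: sect_apply tree_autD)
  qed (simp add: sect_def)
qed

lemma sect_inv:
  assumes g: "tree_aut d g" and u: "u \<in> words d"
  shows "sect d (inv g) (g u) = inv (sect d g u)"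
proof -
  have bij: "bij g" using g tree_autD by blast
  have gu: "g u \<in> words d" using g u tree_autD by blast
  have left: "sect d (inv g) (g u) \<circ> sect d g u = id"
    using sect_comp[OF tree_aut_inv[OF g] g u] bij by (simp add: bij_is_inj sect_id)
  have "g \<circ> inv g = id"
    using bij by (meson bij_is_surj surj_iff)
  moreover have "inv g (g u) = u"
    using bij by (simp add: bij_is_inj)
  ultimately have "sect d g u \<circ> sect d (inv g) (g u) = id"
    using sect_comp[OF g tree_aut_inv[OF g] gu] by (simp add: sect_id)
  with left show ?thesis using inv_unique_comp by metis
qed

section \<open>Groups of tree automorphisms\<close>

locale aut_group =
  fixes d :: nat and G :: "(nat list \<Rightarrow> nat list) set"
  assumes tree_aut_mem: "g \<in> G \<Longrightarrow> tree_aut d g"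
    and id_mem: "id \<in> G"
    and comp_mem: "g \<in> G \<Longrightarrow> h \<in> G \<Longrightarrow> g \<circ> h \<in> G"
    and inv_mem: "g \<in> G \<Longrightarrow> inv g \<in> G"
begin

definition stab_sections :: "nat list \<Rightarrow> (nat list \<Rightarrow> nat list) set" where
  "stab_sections u = (\<lambda>g. sect d g u) ` stabilizer G u"

lemma stab_sectionsI: "g \<in> G \<Longrightarrow> g u = u \<Longrightarrow> sect d g u \<in> stab_sections u"
  by (auto simp: stab_sections_def stabilizer_def)

lemma stab_sectionsE:
  assumes "s \<in> stab_sections u"
  obtains g where "g \<in> G" "g u = u" "sect d g u = s"
  using assms by (auto simp: stab_sections_def stabilizer_def)

lemma id_stab_sections: "id \<in> stab_sections u"
  using stab_sectionsI[OF id_mem] by (simp add: sect_id)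

lemma comp_stab_sections:
  assumes u: "u \<in> words d" and "s \<in> stab_sections u" "t \<in> stab_sections u"
  shows "s \<circ> t \<in> stab_sections u"
proof -
  obtain g h where "g \<in> G" "g u = u" "sect d g u = s" "h \<in> G" "h u = u" "sect d h u = t"
    using assms by (meson stab_sectionsE)
  then show ?thesis
    using stab_sectionsI[of "g \<circ> h" u] comp_mem sect_comp[OF tree_aut_mem tree_aut_mem u] by simp
qed

lemma inv_stab_sections:
  assumes u: "u \<in> words d" and "s \<in> stab_sections u"
  shows "inv s \<in> stab_sections u"
proof -
  obtain g where g: "g \<in> G" "g u = u" "sect d g u = s"
    using assms by (meson stab_sectionsE)
  have "inv g u = u"
    using g tree_autD(1)[OF tree_aut_mem] by (metis bij_is_inj inv_f_f)
  moreover have "sect d (inv g) u = inv s"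
    using sect_inv[OF tree_aut_mem[OF g(1)] u] g(2,3) by simp
  ultimately show ?thesis
    using stab_sectionsI[of "inv g" u] inv_mem[OF g(1)] by simp
qed

lemma conj_stab_sections:
  assumes u: "u \<in> words d" and h: "h \<in> G" and g: "g \<in> G" "g (h u) = h u"
  shows "inv (sect d h u) \<circ> sect d g (h u) \<circ> sect d h u \<in> stab_sections u"
proof -
  have ah: "tree_aut d h" and ag: "tree_aut d g" using tree_aut_mem h g by auto
  have hu: "h u \<in> words d" using ah u tree_autD by blast
  have "(inv h \<circ> g \<circ> h) u = u"
    using g tree_autD(1)[OF ah] by (simp add: bij_is_inj)
  moreover have "sect d (inv h \<circ> g \<circ> h) u = inv (sect d h u) \<circ> sect d g (h u) \<circ> sect d h u"
    using sect_comp[OF tree_aut_comp[OF tree_aut_inv[OF ah] ag] ah u]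
      sect_comp[OF tree_aut_inv[OF ah] ag hu] sect_inv[OF ah u] g(2) by simp
  ultimately show ?thesis
    using stab_sectionsI[of "inv h \<circ> g \<circ> h" u] comp_mem inv_mem g h by metis
qed

lemma subset_stab_sections_if_level1:
  assumes level1: "\<And>x. x \<in> {1..d} \<Longrightarrow> G \<subseteq> stab_sections [x]"
    and "u \<in> words d"
  shows "G \<subseteq> stab_sections u"
  using \<open>u \<in> words d\<close>
proof (induction u)
  case Nil
  show ?case using stab_sectionsI[of _ "[]"] tree_aut_Nil sect_Nil tree_aut_mem by fastforce
next
  case (Cons x u)
  show ?case
  proof
    fix h assume "h \<in> G"
    then obtain g' where g': "g' \<in> G" "g' u = u" "sect d g' u = h"
      using Cons by (auto elim: stab_sectionsE)
    moreover have "g' \<in> stab_sections [x]"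
      using Cons.prems level1 g'(1) by auto
    ultimately obtain g where g: "g \<in> G" "g [x] = [x]" "sect d g [x] = g'"
      by (auto elim: stab_sectionsE)
    have "g (x # u) = x # u"
      using tree_aut_append[OF tree_aut_mem, of g "[x]" u] Cons.prems g g' by simp
    moreover have "sect d g (x # u) = h"
      using sect_append[of "[x]" d u] Cons.prems g g' by simp
    ultimately show "h \<in> stab_sections (x # u)"
      using stab_sectionsI[OF g(1)] by metis
  qed
qed

lemma fractal_if_level1:
  assumes self_similar: "\<And>g u. g \<in> G \<Longrightarrow> u \<in> words d \<Longrightarrow> sect d g u \<in> G"
    and level1: "\<And>x. x \<in> {1..d} \<Longrightarrow> G \<subseteq> stab_sections [x]"
  shows "fractal d G"
proof -
  have "stab_sections u = G" if "u \<in> words d" for u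
  proof
    show "stab_sections u \<subseteq> G"
      using self_similar that by (auto elim: stab_sectionsE)
    show "G \<subseteq> stab_sections u"
      using subset_stab_sections_if_level1[OF level1 that] .
  qed
  then show ?thesis unfolding fractal_def stab_sections_def by blast
qed

lemma spherically_transitive_if_level1:
  assumes transitive1: "\<And>x y. x \<in> {1..d} \<Longrightarrow> y \<in> {1..d} \<Longrightarrow> \<exists>g\<in>G. g [x] = [y]"
    and level1: "\<And>x. x \<in> {1..d} \<Longrightarrow> G \<subseteq> stab_sections [x]"
  shows "spherically_transitive d G"
proof -
  have "\<exists>g\<in>G. g u = v" if "u \<in> words d" "v \<in> words d" "length u = length v" for u v
    using that
  proof (induction v arbitrary: u)
    case Nil
    then show ?case using id_mem by (intro bexI[of _ id]) auto
  next
    case (Cons y v)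
    then obtain x u0 where u: "u = x # u0" "[x] \<in> words d" "u0 \<in> words d" "length u0 = length v"
      by (cases u) auto
    have y: "y \<in> {1..d}" "v \<in> words d"
      using Cons.prems by auto
    obtain g1 where g1: "g1 \<in> G" "g1 [x] = [y]"
      using transitive1 u(2) y(1) by auto
    define u' where "u' = sect d g1 [x] u0"
    have u': "u' \<in> words d" "length u' = length v"
      unfolding u'_def using sect_in_words[OF tree_aut_mem[OF g1(1)] u(2,3)]
        length_sect[OF tree_aut_mem[OF g1(1)] u(2,3)] u(4) by auto
    have g1u: "g1 u = y # u'"
      using tree_aut_append[OF tree_aut_mem[OF g1(1)] u(2,3)] g1(2) u(1) by (simp add: u'_def)
    obtain h where h: "h \<in> G" "h u' = v"
      using Cons.IH[OF u'(1) y(2) u'(2)] by blast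
    have "h \<in> stab_sections [y]"
      using level1 y(1) h(1) by auto
    then obtain g2 where g2: "g2 \<in> G" "g2 [y] = [y]" "sect d g2 [y] = h"
      by (rule stab_sectionsE)
    have "g2 (y # u') = y # v"
      using tree_aut_append[OF tree_aut_mem[OF g2(1)], of "[y]" u'] y u' g2 h by simp
    then have "(g2 \<circ> g1) u = y # v"
      using g1u by simp
    then show ?case using comp_mem[OF g2(1) g1(1)] by blast
  qed
  then show ?thesis unfolding spherically_transitive_def by blast
qed

end

section \<open>The group G_d\<close>

lemma nxt_ge_Suc_0 [simp]: "Suc 0 \<le> nxt d i"
  by (simp add: nxt_def)

lemma nxt_le [simp]: "Suc 0 \<le> i \<Longrightarrow> i \<le> d \<Longrightarrow> nxt d i \<le> d"
  by (simp add: nxt_def)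

lemma nxt_in: "i \<in> {1..d} \<Longrightarrow> nxt d i \<in> {1..d}"
  by simp

lemma nxt_neq: "2 \<le> d \<Longrightarrow> i \<in> {1..d} \<Longrightarrow> nxt d i \<noteq> i"
  by (auto simp: nxt_def)

fun ungenrec :: "nat \<Rightarrow> nat \<Rightarrow> nat list \<Rightarrow> nat list" where
  "ungenrec d i [] = []"
| "ungenrec d i (x # w) =
     (if x = nxt d i then i # ungenrec d i w
      else if x = i then nxt d i # ungenrec d (nxt d i) w
      else x # w)"

lemma ungenrec_genrec: "2 \<le> d \<Longrightarrow> i \<in> {1..d} \<Longrightarrow> ungenrec d i (genrec d i w) = w"
  by (induction w arbitrary: i) (auto simp: nxt_neq nxt_in)

lemma genrec_ungenrec: "2 \<le> d \<Longrightarrow> i \<in> {1..d} \<Longrightarrow> genrec d i (ungenrec d i w) = w"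
  by (induction w arbitrary: i) (auto simp: nxt_neq nxt_in)

lemma genrec_in_words: "i \<in> {1..d} \<Longrightarrow> w \<in> words d \<Longrightarrow> genrec d i w \<in> words d"
  by (induction w arbitrary: i) (auto simp: nxt_in)

lemma ungenrec_in_words: "i \<in> {1..d} \<Longrightarrow> w \<in> words d \<Longrightarrow> ungenrec d i w \<in> words d"
  by (induction w arbitrary: i) (auto simp: nxt_in)

lemma length_genrec: "length (genrec d i w) = length w"
  by (induction w arbitrary: i) auto

lemma take_genrec: "take (length u) (genrec d i (u @ v)) = genrec d i u"
  by (induction u arbitrary: i) auto

lemma tree_aut_gen:
  assumes d: "2 \<le> d" and i: "i \<in> {1..d}"
  shows "tree_aut d (gen d i)"
proof -
  define ungen where "ungen = (\<lambda>u. if u \<in> words d then ungenrec d i u else u)"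
  have "gen d i \<circ> ungen = id"
    by (rule ext) (simp add: ungen_def gen_def ungenrec_in_words[OF i] genrec_ungenrec[OF d i])
  moreover have "ungen \<circ> gen d i = id"
    by (rule ext) (simp add: ungen_def gen_def genrec_in_words[OF i] ungenrec_genrec[OF d i])
  ultimately have "bij (gen d i)" using o_bij by blast
  then show ?thesis unfolding tree_aut_def
    by (auto simp: gen_def genrec_in_words[OF i] length_genrec take_genrec)
qed

lemma gen_letter: "i \<in> {1..d} \<Longrightarrow> gen d i [i] = [nxt d i]"
  by (simp add: gen_def)

lemma gen_nxt_letter: "2 \<le> d \<Longrightarrow> i \<in> {1..d} \<Longrightarrow> gen d i [nxt d i] = [i]"
  using nxt_neq[of d i] nxt_in[of i d] by (simp add: gen_def)

lemma sect_gen_letter: "i \<in> {1..d} \<Longrightarrow> sect d (gen d i) [i] = gen d i"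
  by (rule ext) (auto simp: sect_def gen_def)

lemma sect_gen_nxt_letter: "2 \<le> d \<Longrightarrow> i \<in> {1..d} \<Longrightarrow> sect d (gen d i) [nxt d i] = gen d (nxt d i)"
  using nxt_neq[of d i] nxt_in[of i d] by (intro ext) (auto simp: sect_def gen_def)

lemma sect_gen_other_letter:
  "x \<noteq> i \<Longrightarrow> x \<noteq> nxt d i \<Longrightarrow> x \<in> {1..d} \<Longrightarrow> sect d (gen d i) [x] = id"
  by (rule ext) (auto simp: sect_def gen_def)

lemma Gd_comp: "g \<in> Gd d \<Longrightarrow> h \<in> Gd d \<Longrightarrow> g \<circ> h \<in> Gd d"
  by (induction rule: Gd.induct) (simp_all add: comp_assoc Gd.intros)

lemma gen_in_Gd: "i \<in> {1..d} \<Longrightarrow> gen d i \<in> Gd d"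
  using Gd_gen[OF Gd_id] by simp

lemma inv_gen_in_Gd: "i \<in> {1..d} \<Longrightarrow> inv (gen d i) \<in> Gd d"
  using Gd_inv[OF Gd_id] by simp

lemma tree_aut_Gd:
  assumes d: "2 \<le> d"
  shows "g \<in> Gd d \<Longrightarrow> tree_aut d g"
proof (induction rule: Gd.induct)
  case Gd_id
  show ?case by (rule tree_aut_id)
next
  case (Gd_gen g i)
  show ?case by (rule tree_aut_comp[OF tree_aut_gen[OF d Gd_gen(2)] Gd_gen(3)])
next
  case (Gd_inv g i)
  show ?case by (rule tree_aut_comp[OF tree_aut_inv[OF tree_aut_gen[OF d Gd_inv(2)]] Gd_inv(3)])
qed

lemma inv_Gd:
  assumes d: "2 \<le> d"
  shows "g \<in> Gd d \<Longrightarrow> inv g \<in> Gd d"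
proof (induction rule: Gd.induct)
  case Gd_id
  show ?case by (simp only: inv_id Gd.Gd_id)
next
  case (Gd_gen g i)
  have "inv (gen d i \<circ> g) = inv g \<circ> inv (gen d i)"
    using o_inv_distrib tree_autD(1)[OF tree_aut_gen[OF d Gd_gen(2)]]
      tree_autD(1)[OF tree_aut_Gd[OF d Gd_gen(1)]] by blast
  then show ?case using Gd_comp[OF Gd_gen(3) inv_gen_in_Gd[OF Gd_gen(2)]] by (simp only:)
next
  case (Gd_inv g i)
  have bij: "bij (gen d i)" using tree_autD(1)[OF tree_aut_gen[OF d Gd_inv(2)]] .
  have "inv (inv (gen d i) \<circ> g) = inv g \<circ> gen d i"
    using o_inv_distrib bij_imp_bij_inv[OF bij] tree_autD(1)[OF tree_aut_Gd[OF d Gd_inv(1)]]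
      inv_inv_eq[OF bij] by metis
  then show ?case using Gd_comp[OF Gd_inv(3) gen_in_Gd[OF Gd_inv(2)]] by (simp only:)
qed

lemma aut_group_Gd: "2 \<le> d \<Longrightarrow> aut_group d (Gd d)"
  by unfold_locales (auto intro: tree_aut_Gd Gd_id Gd_comp inv_Gd)

definition gens :: "nat \<Rightarrow> (nat list \<Rightarrow> nat list) set" where
  "gens d = insert id (gen d ` {1..d})"

lemma gens_cases:
  assumes "s \<in> gens d"
  obtains "s = id" | i where "i \<in> {1..d}" "s = gen d i"
  using assms unfolding gens_def by blast

lemma gen_in_gens: "i \<in> {1..d} \<Longrightarrow> gen d i \<in> gens d"
  by (simp add: gens_def)

lemma gens_subset_Gd: "gens d \<subseteq> Gd d"
  using Gd.Gd_id gen_in_Gd by (auto simp: gens_def)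

lemma sect_gens_letter:
  assumes d: "2 \<le> d" and s: "s \<in> gens d" and x: "x \<in> {1..d}"
  shows "sect d s [x] \<in> gens d"
  using s
proof (cases rule: gens_cases)
  case 1
  then show ?thesis by (simp add: gens_def sect_id)
next
  case (2 i)
  then show ?thesis
    using x nxt_in sect_gen_letter sect_gen_nxt_letter[OF d] sect_gen_other_letter
    unfolding gens_def by (metis image_eqI insertCI)
qed

lemma sect_gens:
  assumes d: "2 \<le> d"
  shows "s \<in> gens d \<Longrightarrow> u \<in> words d \<Longrightarrow> sect d s u \<in> gens d"
proof (induction u arbitrary: s)
  case Nil
  have "tree_aut d s"
    using Nil(1) by (cases rule: gens_cases) (auto intro: tree_aut_id tree_aut_gen[OF d])
  then show ?case using Nil(1) sect_Nil by metis
next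
  case (Cons x u)
  have x: "[x] \<in> words d" "x \<in> {1..d}" and u: "u \<in> words d"
    using Cons.prems by auto
  show ?case
    using Cons.IH[OF sect_gens_letter[OF d Cons.prems(1) x(2)] u] sect_append[OF x(1) u] by simp
qed

lemma sect_Gd:
  assumes d: "2 \<le> d"
  shows "g \<in> Gd d \<Longrightarrow> u \<in> words d \<Longrightarrow> sect d g u \<in> Gd d"
proof (induction arbitrary: u rule: Gd.induct)
  case Gd_id
  show ?case by (simp only: sect_id Gd.Gd_id)
next
  case (Gd_gen g i)
  have "g u \<in> words d" using tree_autD(3)[OF tree_aut_Gd[OF d Gd_gen(1)] Gd_gen(4)] .
  then have "sect d (gen d i) (g u) \<in> Gd d"
    using sect_gens[OF d gen_in_gens[OF Gd_gen(2)]] gens_subset_Gd by blast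
  then show ?case
    using sect_comp[OF tree_aut_gen[OF d Gd_gen(2)] tree_aut_Gd[OF d Gd_gen(1)] Gd_gen(4)]
      Gd_comp Gd_gen(3)[OF Gd_gen(4)] by metis
next
  case (Gd_inv g i)
  have a: "tree_aut d (gen d i)" using tree_aut_gen[OF d Gd_inv(2)] .
  define w where "w = inv (gen d i) (g u)"
  have w: "w \<in> words d" "gen d i w = g u"
    using tree_autD(3)[OF tree_aut_Gd[OF d Gd_inv(1)] Gd_inv(4)] tree_autD(1)[OF a]
      tree_autD(3)[OF tree_aut_inv[OF a]]
    by (simp_all add: w_def bij_is_surj surj_f_inv_f)
  have "sect d (gen d i) w \<in> Gd d"
    using sect_gens[OF d gen_in_gens[OF Gd_inv(2)] w(1)] gens_subset_Gd by blast
  then have "sect d (inv (gen d i)) (g u) \<in> Gd d"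
    using sect_inv[OF a w(1)] w(2) inv_Gd[OF d] by simp
  then show ?case
    using sect_comp[OF tree_aut_inv[OF a] tree_aut_Gd[OF d Gd_inv(1)] Gd_inv(4)]
      Gd_comp Gd_inv(3)[OF Gd_inv(4)] by metis
qed

section \<open>Level-one transitivity and fractality of G_d\<close>

definition shift :: "nat \<Rightarrow> nat \<Rightarrow> nat \<Rightarrow> nat" where
  "shift d x k = (x - 1 + k) mod d + 1"

lemma shift_in: "0 < d \<Longrightarrow> shift d x k \<in> {1..d}"
  by (auto simp: shift_def Suc_le_eq)

lemma shift_0: "x \<in> {1..d} \<Longrightarrow> shift d x 0 = x"
  by (auto simp: shift_def)

lemma shift_Suc: "shift d x (Suc k) = nxt d (shift d x k)"
  by (auto simp: shift_def nxt_def mod_Suc)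

lemma shift_add_period: "shift d x (d + k) = shift d x k"
  by (simp add: shift_def add.left_commute)

lemma shift_surj:
  assumes "x \<in> {1..d}" "y \<in> {1..d}"
  shows "\<exists>k. shift d x k = y"
proof
  have "x - 1 + (y + d - x) = (y - 1) + d" and "y - 1 < d"
    using assms by auto
  then show "shift d x (y + d - x) = y"
    using assms by (simp only: shift_def mod_add_self2 mod_less) simp
qed

text \<open>The chain P_k = a_x a_{x+1} \<cdots> a_{x+k-1}; as composition of functions the
  factors are written in reverse order.\<close>
primrec gen_chain :: "nat \<Rightarrow> nat \<Rightarrow> nat \<Rightarrow> nat list \<Rightarrow> nat list" where
  "gen_chain d x 0 = id"
| "gen_chain d x (Suc k) = gen d (shift d x k) \<circ> gen_chain d x k"

lemma gen_chain_period: "gen_chain d x (d + k) = gen_chain d x k \<circ> gen_chain d x d"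
  by (induction k) (simp_all add: shift_add_period comp_assoc)

context
  fixes d :: nat
  assumes two_le_d: "2 \<le> d"
begin

interpretation Gd_group: aut_group d "Gd d"
  by (rule aut_group_Gd[OF two_le_d])

lemma gen_chain_in_Gd: "gen_chain d x k \<in> Gd d"
proof (induction k)
  case 0
  show ?case by (simp only: gen_chain.simps(1) Gd.Gd_id)
next
  case (Suc k)
  show ?case
    unfolding gen_chain.simps(2) by (rule Gd_gen[OF Suc shift_in]) (use two_le_d in simp)
qed

lemma gen_chain_comp_inv: "gen_chain d x k \<circ> inv (gen_chain d x k) = id"
  using tree_autD(1)[OF tree_aut_Gd[OF two_le_d gen_chain_in_Gd]] by (meson bij_is_surj surj_iff)

lemma gen_chain_letter: "x \<in> {1..d} \<Longrightarrow> gen_chain d x k [x] = [shift d x k]"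
proof (induction k)
  case 0
  then show ?case by (simp add: shift_0)
next
  case (Suc k)
  have "shift d x k \<in> {1..d}" using shift_in two_le_d by simp
  then show ?case using Suc gen_letter by (simp add: shift_Suc)
qed

lemma sect_gen_chain_letter:
  assumes x: "x \<in> {1..d}"
  shows "sect d (gen_chain d x k) [x] = gen_chain d x k"
proof (induction k)
  case 0
  show ?case by (simp only: gen_chain.simps(1) sect_id)
next
  case (Suc k)
  have a: "shift d x k \<in> {1..d}" using two_le_d shift_in by simp
  have "sect d (gen d (shift d x k) \<circ> gen_chain d x k) [x]
      = sect d (gen d (shift d x k)) (gen_chain d x k [x]) \<circ> sect d (gen_chain d x k) [x]"
    by (rule sect_comp[OF tree_aut_gen[OF two_le_d a] tree_aut_Gd[OF two_le_d gen_chain_in_Gd]])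
      (use x in simp)
  also have "\<dots> = gen d (shift d x k) \<circ> gen_chain d x k"
    by (simp only: gen_chain_letter[OF x] sect_gen_letter[OF a] Suc)
  finally show ?case by (simp only: gen_chain.simps(2))
qed

lemma level1_transitive_Gd:
  assumes "x \<in> {1..d}" "y \<in> {1..d}"
  shows "\<exists>g\<in>Gd d. g [x] = [y]"
  using shift_surj[OF assms] gen_chain_letter[OF assms(1)] gen_chain_in_Gd by blast

lemma gen_square_letter: "y \<in> {1..d} \<Longrightarrow> (gen d y \<circ> gen d y) [y] = [y]"
  using gen_letter gen_nxt_letter[OF two_le_d] by simp

lemma sect_gen_square_letter:
  assumes y: "y \<in> {1..d}"
  shows "sect d (gen d y \<circ> gen d y) [y] = gen d (nxt d y) \<circ> gen d y"
  using sect_comp[OF tree_aut_gen[OF two_le_d y] tree_aut_gen[OF two_le_d y]] y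
    gen_letter[OF y] sect_gen_nxt_letter[OF two_le_d y] sect_gen_letter[OF y] by simp

lemma gen_chain_step_stab_sections:
  assumes x: "x \<in> {1..d}"
  shows "inv (gen_chain d x m) \<circ> gen_chain d x (Suc (Suc m)) \<in> Gd_group.stab_sections [x]"
proof -
  define y where "y = shift d x m"
  have y: "y \<in> {1..d}" using two_le_d shift_in y_def by simp
  have "gen d y \<circ> gen d y \<in> Gd d"
    by (rule Gd_comp[OF gen_in_Gd[OF y] gen_in_Gd[OF y]])
  moreover have "(gen d y \<circ> gen d y) (gen_chain d x m [x]) = gen_chain d x m [x]"
    using gen_chain_letter[OF x] gen_square_letter[OF y] y_def by simp
  ultimately have "inv (sect d (gen_chain d x m) [x]) \<circ> sect d (gen d y \<circ> gen d y) (gen_chain d x m [x])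
      \<circ> sect d (gen_chain d x m) [x] \<in> Gd_group.stab_sections [x]"
    using Gd_group.conj_stab_sections[OF _ gen_chain_in_Gd] x by simp
  then have "inv (gen_chain d x m) \<circ> (gen d (nxt d y) \<circ> gen d y) \<circ> gen_chain d x m
      \<in> Gd_group.stab_sections [x]"
    by (simp only: sect_gen_chain_letter[OF x] gen_chain_letter[OF x] y_def[symmetric]
        sect_gen_square_letter[OF y])
  moreover have "gen_chain d x (Suc (Suc m)) = gen d (nxt d y) \<circ> gen d y \<circ> gen_chain d x m"
    by (simp only: gen_chain.simps(2) shift_Suc y_def comp_assoc)
  ultimately show ?thesis by (simp only: comp_assoc)
qed

lemma gen_chain_even_stab_sections:
  assumes x: "x \<in> {1..d}"
  shows "gen_chain d x (2 * m) \<in> Gd_group.stab_sections [x]"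
proof (induction m)
  case 0
  show ?case by (simp only: mult_0_right gen_chain.simps(1) Gd_group.id_stab_sections)
next
  case (Suc m)
  have "gen_chain d x (2 * Suc m)
      = gen_chain d x (2 * m) \<circ> (inv (gen_chain d x (2 * m)) \<circ> gen_chain d x (Suc (Suc (2 * m))))"
    by (simp only: comp_assoc[symmetric] gen_chain_comp_inv id_comp mult_Suc_right add_2_eq_Suc)
  moreover have "[x] \<in> words d" using x by simp
  ultimately show ?case
    using Gd_group.comp_stab_sections[OF _ Suc gen_chain_step_stab_sections[OF x]] by metis
qed

lemma gen_chain_stab_sections:
  assumes odd: "odd d" and x: "x \<in> {1..d}"
  shows "gen_chain d x k \<in> Gd_group.stab_sections [x]"
proof (cases "even k")
  case True
  then show ?thesis using gen_chain_even_stab_sections[OF x] by (metis evenE)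
next
  case False
  then obtain m where m: "d + k = 2 * m" using odd by (metis odd_add evenE)
  have xw: "[x] \<in> words d" using x by simp
  have "gen_chain d x d [x] = [x]"
    using gen_chain_letter[OF x] shift_add_period[of d x 0] shift_0[OF x] by simp
  then have "gen_chain d x d \<in> Gd_group.stab_sections [x]"
    using Gd_group.stab_sectionsI[OF gen_chain_in_Gd] sect_gen_chain_letter[OF x] by metis
  then have "gen_chain d x (d + k) \<circ> inv (gen_chain d x d) \<in> Gd_group.stab_sections [x]"
    using Gd_group.comp_stab_sections[OF xw _ Gd_group.inv_stab_sections[OF xw]]
      gen_chain_even_stab_sections[OF x, of m] m by metis
  moreover have "gen_chain d x (d + k) \<circ> inv (gen_chain d x d) = gen_chain d x k"
    by (simp only: gen_chain_period comp_assoc gen_chain_comp_inv comp_id)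
  ultimately show ?thesis by (simp only:)
qed

lemma gen_stab_sections:
  assumes odd: "odd d" and x: "x \<in> {1..d}" and j: "j \<in> {1..d}"
  shows "gen d j \<in> Gd_group.stab_sections [x]"
proof -
  obtain k where k: "shift d x k = j" using shift_surj[OF x j] by blast
  have xw: "[x] \<in> words d" using x by simp
  have "gen_chain d x (Suc k) \<circ> inv (gen_chain d x k) \<in> Gd_group.stab_sections [x]"
    using Gd_group.comp_stab_sections[OF xw _ Gd_group.inv_stab_sections[OF xw]]
      gen_chain_stab_sections[OF odd x] by metis
  moreover have "gen_chain d x (Suc k) \<circ> inv (gen_chain d x k) = gen d j"
    by (simp only: gen_chain.simps(2) k comp_assoc gen_chain_comp_inv comp_id)
  ultimately show ?thesis by (simp only:)
qed

lemma Gd_subset_stab_sections: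
  assumes odd: "odd d" and x: "x \<in> {1..d}"
  shows "Gd d \<subseteq> Gd_group.stab_sections [x]"
proof
  have xw: "[x] \<in> words d" using x by simp
  fix g assume "g \<in> Gd d"
  then show "g \<in> Gd_group.stab_sections [x]"
  proof (induction rule: Gd.induct)
    case Gd_id
    show ?case by (rule Gd_group.id_stab_sections)
  next
    case (Gd_gen g i)
    show ?case
      using Gd_group.comp_stab_sections[OF xw gen_stab_sections[OF odd x Gd_gen(2)] Gd_gen(3)]
      unfolding comp_def .
  next
    case (Gd_inv g i)
    have "inv (gen d i) \<in> Gd_group.stab_sections [x]"
      using Gd_group.inv_stab_sections[OF xw gen_stab_sections[OF odd x Gd_inv(2)]] .
    then show ?case
      using Gd_group.comp_stab_sections[OF xw _ Gd_inv(3)] unfolding comp_def by blast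
  qed
qed

end

theorem theorem4p6:
  fixes d :: nat
  assumes "d \<ge> 3" and "odd d"
  shows "spherically_transitive d (Gd d) \<and> fractal d (Gd d)"
proof -
  have d: "2 \<le> d" using assms(1) by simp
  interpret Gd_group: aut_group d "Gd d" by (rule aut_group_Gd[OF d])
  have level1: "\<And>x. x \<in> {1..d} \<Longrightarrow> Gd d \<subseteq> Gd_group.stab_sections [x]"
    using Gd_subset_stab_sections[OF d assms(2)] .
  show ?thesis
    using Gd_group.spherically_transitive_if_level1[OF level1_transitive_Gd[OF d] level1]
      Gd_group.fractal_if_level1[OF sect_Gd[OF d] level1] by blast
qed

end
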